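(* Let $H=\sum_{j=1}^{N_H}h_j\sigma_j$ and all notation be as in the context, let $N_T\ge1$ be an integer and $\tau>0$. Define $$C=\int_{\mathbb{R}}dt\,e^{-\frac{N_T^2t^2}{2\tau^2}}\big(\|f(t,\cdot)\|_{TV}\big)^{N_T},\qquad |\psi\rangle=\frac{\tau\sqrt{2\pi}}{C\,N_T}\,e^{-\frac12(H-E_g)^2\tau^2}|\Psi_0\rangle,$$ and $$c(\tau)=\int_{\mathbb{R}}du\,e^{-\frac{u^2}{2}}\Big(2e^{\frac{h_{tot}\tau}{N_T}|u|}-1-2\frac{h_{tot}\tau}{N_T}|u|\Big)^{N_T}.$$ Then $\langle\psi|\psi\rangle\ge \dfrac{2\pi p_g}{c(\tau)^2}$. Moreover, when $N_T>4h_{tot}^2\tau^2$, $c(\tau)\le\sqrt{\dfrac{2\pi}{1-4h_{tot}^2\tau^2/N_T}}$.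
   Context: $H=\sum_{j=1}^{N_H}h_j\sigma_j$ acts on $n$ qubits, with $\sigma_j$ Pauli operators (tensor products of single-qubit Paulis), $h_j\in\mathbb{R}$, and $h_{tot}=\sum_j|h_j|$. $E_g$ is the smallest eigenvalue of $H$, $|\Psi_g\rangle$ a corresponding normalised eigenvector, $|\Psi_0\rangle$ a normalised state, and $p_g=|\langle\Psi_g|\Psi_0\rangle|^2$. Notation: $\mathcal{L}_k=\{\vec l=(l_1,\dots,l_k):l_q\in\{1,\dots,N_H\}\}$; $m(\vec l,j)=\sum_{q=1}^k\delta_{l_q,j}$; $S(\vec l)=\sigma_{l_k}\cdots\sigma_{l_1}$; $T(\vec l)=\sigma_{N_H}^{m(\vec l,N_H)}\cdots\sigma_1^{m(\vec l,1)}$; $a(\vec l)=\mathrm{Tr}[S(\vec l)T(\vec l)^\dagger]/\mathrm{Tr}(\mathbb{1})\in\{\pm1\}$. For $t\in\mathbb{R}$, $f(t,\cdot)$ is the complex measure on $\mathbb{R}^{N_H}$ $$f(t,\cdot)=\delta_{(h_1t,\dots,h_{N_H}t)}+\sum_{k=2}^\infty\sum_{\vec l\in\mathcal{L}_k}\frac{\prod_{q=1}^k(-ih_{l_q}t)}{k!}\big[a(\vec l)-1\big]\Big(\prod_{j=1}^{N_H}i^{m(\vec l,j)}\Big)\,\delta_{(m(\vec l,1)\pi/2,\dots,m(\vec l,N_H)\pi/2)},$$ where $\delta_y$ is the Dirac point mass at $y$, and $\|f(t,\cdot)\|_{TV}=\int|f(t,\omega)|d\omega$ denotes its total variation. (In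 the paper, $|\psi\rangle$ is the random-circuit variational state built from the Hamiltonian ansatz and the prior guiding function $\prod_i f(t,\omega_i)$, and $C$ is its normalisation constant.) *)

theory Defs
  imports "HOL-Analysis.Analysis" "Jordan_Normal_Form.Char_Poly"
begin

(* Single-qubit Paulis: 0 = I, 1 = X, 2 = Y, 3 = Z *)
definition pauli1 :: "nat \<Rightarrow> complex mat" where
  "pauli1 a = (if a = 1 then mat_of_rows_list 2 [[0,1],[1,0]]
               else if a = 2 then mat_of_rows_list 2 [[0,-\<i>],[\<i>,0]]
               else if a = 3 then mat_of_rows_list 2 [[1,0],[0,-1]]
               else mat_of_rows_list 2 [[1,0],[0,1]])"

(* n-qubit Pauli operator (tensor product of single-qubit Paulis) given by a
   Pauli string P : {0..<n} -> {0,1,2,3}; qubit q is bit q of the basis index *)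
definition pauli_mat :: "nat \<Rightarrow> (nat \<Rightarrow> nat) \<Rightarrow> complex mat" where
  "pauli_mat n P = mat (2^n) (2^n)
     (\<lambda>(r,c). \<Prod>q<n. pauli1 (P q) $$ (r div 2^q mod 2, c div 2^q mod 2))"

definition hamiltonian :: "nat \<Rightarrow> nat \<Rightarrow> (nat \<Rightarrow> real) \<Rightarrow> (nat \<Rightarrow> nat \<Rightarrow> nat) \<Rightarrow> complex mat" where
  "hamiltonian n NH h \<sigma> = mat (2^n) (2^n)
     (\<lambda>ij. \<Sum>j\<in>{1..NH}. complex_of_real (h j) * pauli_mat n (\<sigma> j) $$ ij)"

definition htot :: "nat \<Rightarrow> (nat \<Rightarrow> real) \<Rightarrow> real" where
  "htot NH h = (\<Sum>j\<in>{1..NH}. \<bar>h j\<bar>)"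

definition mat_trace :: "complex mat \<Rightarrow> complex" where
  "mat_trace A = (\<Sum>i<dim_row A. A $$ (i,i))"

definition conj_transpose :: "complex mat \<Rightarrow> complex mat" where
  "conj_transpose A = mat (dim_col A) (dim_row A) (\<lambda>(i,j). cnj (A $$ (j,i)))"

definition mult_idx :: "nat list \<Rightarrow> nat \<Rightarrow> nat" where
  "mult_idx l j = count_list l j"

(* S(l) = sigma_{l_k} ... sigma_{l_1}, for l = [l_1,...,l_k] *)
definition S_op :: "nat \<Rightarrow> (nat \<Rightarrow> nat \<Rightarrow> nat) \<Rightarrow> nat list \<Rightarrow> complex mat" where
  "S_op n \<sigma> l = foldl (\<lambda>M j. pauli_mat n (\<sigma> j) * M) (1\<^sub>m (2^n)) l"

(* T(l) = sigma_{NH}^{m(l,NH)} ... sigma_1^{m(l,1)} *)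
definition T_op :: "nat \<Rightarrow> nat \<Rightarrow> (nat \<Rightarrow> nat \<Rightarrow> nat) \<Rightarrow> nat list \<Rightarrow> complex mat" where
  "T_op n NH \<sigma> l = foldl (\<lambda>M j. (pauli_mat n (\<sigma> j) ^\<^sub>m mult_idx l j) * M) (1\<^sub>m (2^n)) [1..<NH+1]"

definition a_coef :: "nat \<Rightarrow> nat \<Rightarrow> (nat \<Rightarrow> nat \<Rightarrow> nat) \<Rightarrow> nat list \<Rightarrow> complex" where
  "a_coef n NH \<sigma> l = mat_trace (S_op n \<sigma> l * conj_transpose (T_op n NH \<sigma> l)) / mat_trace (1\<^sub>m (2^n))"

(* index set L_k, k >= 2, all together *)
definition L_set :: "nat \<Rightarrow> nat list set" where
  "L_set NH = {l. 2 \<le> length l \<and> set l \<subseteq> {1..NH}}"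

definition f_coef :: "nat \<Rightarrow> nat \<Rightarrow> (nat \<Rightarrow> real) \<Rightarrow> (nat \<Rightarrow> nat \<Rightarrow> nat) \<Rightarrow> real \<Rightarrow> nat list \<Rightarrow> complex" where
  "f_coef n NH h \<sigma> t l =
     (\<Prod>q\<leftarrow>l. - \<i> * complex_of_real (h q * t)) / of_nat (fact (length l))
     * (a_coef n NH \<sigma> l - 1) * (\<Prod>j\<in>{1..NH}. \<i> ^ mult_idx l j)"

(* location (m(l,1) pi/2, ..., m(l,NH) pi/2) in R^NH (points as lists of length NH) *)
definition f_point :: "nat \<Rightarrow> nat list \<Rightarrow> real list" where
  "f_point NH l = map (\<lambda>j. real (mult_idx l j) * pi / 2) [1..<NH+1]"

(* the discrete complex measure f(t,.) as its mass function on R^NH *)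
definition f_mass :: "nat \<Rightarrow> nat \<Rightarrow> (nat \<Rightarrow> real) \<Rightarrow> (nat \<Rightarrow> nat \<Rightarrow> nat) \<Rightarrow> real \<Rightarrow> real list \<Rightarrow> complex" where
  "f_mass n NH h \<sigma> t y =
     (if y = map (\<lambda>j. h j * t) [1..<NH+1] then 1 else 0)
     + (\<Sum>\<^sub>\<infinity>l\<in>L_set NH. if f_point NH l = y then f_coef n NH h \<sigma> t l else 0)"

definition f_TV :: "nat \<Rightarrow> nat \<Rightarrow> (nat \<Rightarrow> real) \<Rightarrow> (nat \<Rightarrow> nat \<Rightarrow> nat) \<Rightarrow> real \<Rightarrow> real" where
  "f_TV n NH h \<sigma> t = (\<Sum>\<^sub>\<infinity>y\<in>(UNIV :: real list set). norm (f_mass n NH h \<sigma> t y))"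

definition mat_exp :: "complex mat \<Rightarrow> complex mat" where
  "mat_exp A = mat (dim_row A) (dim_col A)
     (\<lambda>ij. \<Sum>k. (A ^\<^sub>m k) $$ ij / of_nat (fact k))"

definition vnorm2 :: "complex vec \<Rightarrow> real" where
  "vnorm2 v = (\<Sum>i<dim_vec v. (cmod (v $ i))^2)"

definition vinner :: "complex vec \<Rightarrow> complex vec \<Rightarrow> complex" where
  "vinner v w = (\<Sum>i<dim_vec v. cnj (v $ i) * w $ i)"

end

theory Submission
  imports Defs "HOL-Probability.Distributions"
begin

text \<open>The Gaussian filter \<open>exp (- (H - E\<^sub>g)\<^sup>2 \<tau>\<^sup>2 / 2)\<close> is Hermitian and fixes the
  ground state, so \<open>\<langle>\<Psi>\<^sub>g|\<psi>\<rangle>\<close> is the prefactor of \<open>\<psi>\<close> times \<open>\<langle>\<Psi>\<^sub>g|\<Psi>\<^sub>0\<rangle>\<close>, and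
  Cauchy-Schwarz bounds \<open>\<langle>\<psi>|\<psi>\<rangle>\<close> below by the squared prefactor times \<open>p\<^sub>g\<close>.
  The prefactor is controlled through \<open>C \<le> (\<tau> / N\<^sub>T) c(\<tau>)\<close>: since \<open>S(l)\<close> and \<open>T(l)\<close>
  are unitary, \<open>|a(l)| \<le> 1\<close>, so the point masses of the series part of \<open>f(t,\<cdot>)\<close> add
  up to at most \<open>2 (exp x - 1 - x)\<close> with \<open>x = h\<^sub>t\<^sub>o\<^sub>t |t|\<close>. Hence
  \<open>\<parallel>f(t,\<cdot>)\<parallel>\<^sub>T\<^sub>V \<le> 2 exp x - 1 - 2 x\<close>, and the substitution \<open>t = \<tau> u / N\<^sub>T\<close> gives
  the bound on \<open>C\<close>; the same estimate keeps \<open>\<parallel>f(t,\<cdot>)\<parallel>\<^sub>T\<^sub>V \<ge> 1/2\<close> near \<open>t = 0\<close>, so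
  \<open>C > 0\<close>. Finally \<open>2 exp x - 1 - 2 x \<le> exp (2 x\<^sup>2)\<close> dominates the integrand of
  \<open>c(\<tau>)\<close> by a Gaussian.\<close>

section \<open>A Gaussian integral dominating the normalisation constant\<close>

definition tv_majorant :: "real \<Rightarrow> real" where
  "tv_majorant x = 2 * exp x - 1 - 2 * x"

lemma borel_measurable_tv_majorant[measurable]: "tv_majorant \<in> borel_measurable borel"
  unfolding tv_majorant_def[abs_def] by measurable

lemma tv_majorant_ge_1: "1 \<le> tv_majorant x"
  unfolding tv_majorant_def using exp_ge_add_one_self[of x] by linarith

lemma tv_majorant_le_2_exp: "0 \<le> x \<Longrightarrow> tv_majorant x \<le> 2 * exp x"
  by (simp add: tv_majorant_def)

lemma tv_majorant_le_exp_sq: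
  fixes x :: real assumes "0 \<le> x"
  shows "tv_majorant x \<le> exp (2 * x^2)"
proof -
  \<comment> \<open>\<open>\<phi>\<close> vanishes to second order at 0 and is convex, because \<open>exp y \<le> 2 * exp (2 * y\<^sup>2)\<close>
    follows from \<open>y - 1/8 \<le> 2 * y\<^sup>2\<close> and \<open>exp (1/8) \<le> 2\<close>\<close>
  define \<phi> where "\<phi> y = exp (2 * y^2) - tv_majorant y" for y
  define \<phi>' where "\<phi>' y = 4 * y * exp (2 * y^2) - 2 * exp y + 2" for y :: real
  define \<phi>'' where "\<phi>'' y = (4 + 16 * y^2) * exp (2 * y^2) - 2 * exp y" for y :: real
  have \<phi>_deriv: "(\<phi> has_real_derivative \<phi>' y) (at y)" for y
    unfolding \<phi>_def \<phi>'_def tv_majorant_def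
    by (auto intro!: derivative_eq_intros simp: algebra_simps power2_eq_square)
  have \<phi>'_deriv: "(\<phi>' has_real_derivative \<phi>'' y) (at y)" for y
    unfolding \<phi>'_def \<phi>''_def by (auto intro!: derivative_eq_intros simp: algebra_simps power2_eq_square)
  have "exp (1/8::real) \<le> 1 + 1/8 + (1/8)^2" by (rule exp_bound) auto
  then have exp_eighth: "exp (1/8::real) \<le> 2" by (simp add: power2_eq_square)
  have \<phi>''_nonneg: "0 \<le> \<phi>'' y" for y
  proof -
    have "y - 1/8 \<le> 2 * y^2"
      using sum_power2_ge_zero[of "y - 1/4" 0] by (simp add: power2_eq_square algebra_simps)
    then have "exp y \<le> exp (2 * y^2) * exp (1/8)"
      by (simp flip: exp_add)
    also have "\<dots> \<le> exp (2 * y^2) * 2" using exp_eighth by simp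
    finally have "exp y \<le> 2 * exp (2 * y^2)" by simp
    moreover have "4 * exp (2 * y^2) \<le> (4 + 16 * y^2) * exp (2 * y^2)"
      by (intro mult_right_mono) auto
    ultimately show ?thesis unfolding \<phi>''_def by linarith
  qed
  have "\<phi>' 0 \<le> \<phi>' y" if "0 \<le> y" for y
    using that \<phi>'_deriv \<phi>''_nonneg by (intro DERIV_nonneg_imp_nondecreasing[of 0 y \<phi>']) auto
  then have "0 \<le> \<phi>' y" if "0 \<le> y" for y
    using that by (simp add: \<phi>'_def)
  then have "\<phi> 0 \<le> \<phi> x"
    using assms \<phi>_deriv by (intro DERIV_nonneg_imp_nondecreasing[of 0 x \<phi>]) auto
  then show ?thesis by (simp add: \<phi>_def tv_majorant_def)
qed

lemma has_bochner_integral_gaussian: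
  fixes s :: real assumes "0 < s"
  shows "has_bochner_integral lborel (\<lambda>u. exp (- (s * u^2) / 2)) (sqrt (2 * pi / s))"
proof -
  have density: "sqrt (2 * pi / s) * normal_density 0 (1 / sqrt s) u = exp (- (s * u^2) / 2)" for u
    using assms by (simp add: normal_density_def power_divide real_sqrt_divide real_sqrt_mult)
  have "has_bochner_integral lborel (\<lambda>u. sqrt (2 * pi / s) * normal_density 0 (1 / sqrt s) u)
          (sqrt (2 * pi / s) * 1)"
    using assms by (intro has_bochner_integral_mult_right) (simp add: has_bochner_integral_iff)
  then show ?thesis by (simp add: density)
qed

lemma integrable_gaussian_tv_majorant:
  fixes a :: real assumes "0 \<le> a"
  shows "integrable lborel (\<lambda>u. exp (- (u^2) / 2) * tv_majorant (a * \<bar>u\<bar>) ^ N)"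
proof (rule Bochner_Integration.integrable_bound)
  define b where "b = real N * a"
  show "integrable lborel (\<lambda>u. 2^N * exp (b^2) * exp (- ((1/2) * u^2) / 2))"
    using has_bochner_integral_gaussian[of "1/2"] by (simp add: has_bochner_integral_iff)
  show "AE u in lborel. norm (exp (- (u^2) / 2) * tv_majorant (a * \<bar>u\<bar>) ^ N)
                       \<le> norm (2^N * exp (b^2) * exp (- ((1/2) * u^2) / 2))"
  proof (intro AE_I2)
    fix u :: real
    have "0 \<le> a * \<bar>u\<bar>" using assms by simp
    \<comment> \<open>completing the square: \<open>b * \<bar>u\<bar> \<le> b\<^sup>2 + u\<^sup>2 / 4\<close>\<close>
    have square: "- (u^2) / 2 + b * \<bar>u\<bar> \<le> b^2 + - ((1/2) * u^2) / 2"
      using sum_power2_ge_zero[of "\<bar>u\<bar> / 2 - b" 0] by (simp add: power2_eq_square algebra_simps)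
    have "norm (exp (- (u^2) / 2) * tv_majorant (a * \<bar>u\<bar>) ^ N)
          = exp (- (u^2) / 2) * tv_majorant (a * \<bar>u\<bar>) ^ N"
      using tv_majorant_ge_1[of "a * \<bar>u\<bar>"] by simp
    also have "\<dots> \<le> exp (- (u^2) / 2) * (2 * exp (a * \<bar>u\<bar>)) ^ N"
      using \<open>0 \<le> a * \<bar>u\<bar>\<close> tv_majorant_ge_1[of "a * \<bar>u\<bar>"]
      by (intro mult_left_mono power_mono tv_majorant_le_2_exp) auto
    also have "\<dots> = 2^N * exp (- (u^2) / 2 + b * \<bar>u\<bar>)"
      by (simp add: power_mult_distrib b_def mult_ac flip: exp_of_nat_mult exp_add)
    also have "\<dots> \<le> 2^N * exp (b^2 + - ((1/2) * u^2) / 2)"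
      using square by simp
    also have "\<dots> = norm (2^N * exp (b^2) * exp (- ((1/2) * u^2) / 2))"
      by (simp flip: exp_add)
    finally show "norm (exp (- (u^2) / 2) * tv_majorant (a * \<bar>u\<bar>) ^ N)
                  \<le> norm (2^N * exp (b^2) * exp (- ((1/2) * u^2) / 2))" .
  qed
qed measurable

definition gaussian_tv_integral :: "real \<Rightarrow> nat \<Rightarrow> real" where
  "gaussian_tv_integral a N = (LINT u|lborel. exp (- (u^2) / 2) * tv_majorant (a * \<bar>u\<bar>) ^ N)"

lemma gaussian_tv_integral_le:
  fixes a :: real assumes "0 \<le> a" and small: "4 * real N * a^2 < 1"
  shows "gaussian_tv_integral a N \<le> sqrt (2 * pi / (1 - 4 * real N * a^2))"
proof -
  define s where "s = 1 - 4 * real N * a^2"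
  have "0 < s" using small by (simp add: s_def)
  have "gaussian_tv_integral a N \<le> (LINT u|lborel. exp (- (s * u^2) / 2))"
    unfolding gaussian_tv_integral_def
  proof (rule integral_mono)
    show "integrable lborel (\<lambda>u. exp (- (u^2) / 2) * tv_majorant (a * \<bar>u\<bar>) ^ N)"
      using assms(1) by (rule integrable_gaussian_tv_majorant)
    show "integrable lborel (\<lambda>u. exp (- (s * u^2) / 2))"
      using has_bochner_integral_gaussian[OF \<open>0 < s\<close>] by (simp add: has_bochner_integral_iff)
    fix u :: real
    have "0 \<le> a * \<bar>u\<bar>" using assms(1) by simp
    then have "exp (- (u^2) / 2) * tv_majorant (a * \<bar>u\<bar>) ^ N
               \<le> exp (- (u^2) / 2) * exp (2 * (a * \<bar>u\<bar>)^2) ^ N"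
      using tv_majorant_ge_1[of "a * \<bar>u\<bar>"]
      by (intro mult_left_mono power_mono tv_majorant_le_exp_sq) auto
    also have "\<dots> = exp (- (s * u^2) / 2)"
      by (simp add: s_def power_mult_distrib field_simps flip: exp_of_nat_mult exp_add)
    finally show "exp (- (u^2) / 2) * tv_majorant (a * \<bar>u\<bar>) ^ N \<le> exp (- (s * u^2) / 2)" .
  qed
  also have "\<dots> = sqrt (2 * pi / s)"
    using has_bochner_integral_gaussian[OF \<open>0 < s\<close>] by (rule has_bochner_integral_integral_eq)
  finally show ?thesis by (simp add: s_def)
qed

section \<open>Unitary matrices and Pauli strings\<close>

lemma conj_transpose_dim[simp]:
  "dim_row (conj_transpose A) = dim_col A" "dim_col (conj_transpose A) = dim_row A"
  by (simp_all add: conj_transpose_def)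

lemma conj_transpose_index[simp]:
  "i < dim_col A \<Longrightarrow> j < dim_row A \<Longrightarrow> conj_transpose A $$ (i,j) = cnj (A $$ (j,i))"
  by (simp add: conj_transpose_def)

lemma conj_transpose_conj_transpose[simp]: "conj_transpose (conj_transpose A) = A"
  by (rule eq_matI) auto

lemma conj_transpose_one[simp]: "conj_transpose (1\<^sub>m d) = 1\<^sub>m d"
  by (rule eq_matI) auto

lemma conj_transpose_mult:
  "A \<in> carrier_mat m k \<Longrightarrow> B \<in> carrier_mat k l \<Longrightarrow>
   conj_transpose (A * B) = conj_transpose B * conj_transpose A"
  by (rule eq_matI) (auto simp: scalar_prod_def mult.commute)

lemma conj_transpose_smult: "conj_transpose (c \<cdot>\<^sub>m A) = cnj c \<cdot>\<^sub>m conj_transpose A"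
  by (rule eq_matI) auto

lemma conj_transpose_minus:
  "A \<in> carrier_mat nr nc \<Longrightarrow> B \<in> carrier_mat nr nc \<Longrightarrow>
   conj_transpose (A - B) = conj_transpose A - conj_transpose B"
  by (rule eq_matI) auto

definition unitary_mat :: "nat \<Rightarrow> complex mat \<Rightarrow> bool" where
  "unitary_mat d U \<longleftrightarrow>
     U \<in> carrier_mat d d \<and> U * conj_transpose U = 1\<^sub>m d \<and> conj_transpose U * U = 1\<^sub>m d"

lemma unitary_mat_one: "unitary_mat d (1\<^sub>m d)"
  by (simp add: unitary_mat_def)

lemma unitary_mat_conj_transpose: "unitary_mat d U \<Longrightarrow> unitary_mat d (conj_transpose U)"
  by (auto simp: unitary_mat_def)

lemma unitary_mat_mult:
  assumes "unitary_mat d X" "unitary_mat d Y"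
  shows "unitary_mat d (X * Y)"
proof -
  have X: "X \<in> carrier_mat d d" and Y: "Y \<in> carrier_mat d d"
    using assms by (auto simp: unitary_mat_def)
  have X': "conj_transpose X \<in> carrier_mat d d" and Y': "conj_transpose Y \<in> carrier_mat d d"
    using X Y by auto
  have "X * Y * conj_transpose (X * Y) = X * (Y * (conj_transpose Y * conj_transpose X))"
    unfolding conj_transpose_mult[OF X Y] by (rule assoc_mult_mat[OF X Y mult_carrier_mat[OF Y' X']])
  also have "\<dots> = X * ((Y * conj_transpose Y) * conj_transpose X)"
    using Y Y' X' by (simp add: assoc_mult_mat[OF Y Y' X'])
  also have "\<dots> = 1\<^sub>m d"
    using assms X X' by (simp add: unitary_mat_def)
  finally have right: "X * Y * conj_transpose (X * Y) = 1\<^sub>m d" .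
  have "conj_transpose (X * Y) * (X * Y) = conj_transpose Y * (conj_transpose X * (X * Y))"
    unfolding conj_transpose_mult[OF X Y] by (rule assoc_mult_mat[OF Y' X' mult_carrier_mat[OF X Y]])
  also have "\<dots> = conj_transpose Y * ((conj_transpose X * X) * Y)"
    using X Y X' by (simp add: assoc_mult_mat[OF X' X Y])
  also have "\<dots> = 1\<^sub>m d"
    using assms Y Y' by (simp add: unitary_mat_def)
  finally show ?thesis
    using right X Y by (simp add: unitary_mat_def)
qed

lemma unitary_mat_pow: "unitary_mat d U \<Longrightarrow> unitary_mat d (U ^\<^sub>m k)"
proof (induction k)
  case 0
  then show ?case by (auto simp: unitary_mat_def)
next
  case (Suc k)
  then show ?case by (simp add: unitary_mat_mult)
qed

lemma unitary_mat_foldl_mult: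
  "(\<And>j. j \<in> set l \<Longrightarrow> unitary_mat d (F j)) \<Longrightarrow> unitary_mat d M \<Longrightarrow>
   unitary_mat d (foldl (\<lambda>M j. F j * M) M l)"
  by (induction l arbitrary: M) (simp_all add: unitary_mat_mult)

lemma unitary_mat_diag_norm_le_1:
  assumes "unitary_mat d U" "i < d"
  shows "cmod (U $$ (i,i)) \<le> 1"
proof -
  have U: "U \<in> carrier_mat d d" using assms by (simp add: unitary_mat_def)
  \<comment> \<open>row \<open>i\<close> of \<open>U\<close> is a unit vector\<close>
  have "(U * conj_transpose U) $$ (i,i) = (\<Sum>k<d. of_real ((cmod (U $$ (i,k)))^2))"
    using U assms(2)
    by (simp add: scalar_prod_def atLeast0LessThan complex_norm_square del: of_real_power)
  then have "(\<Sum>k<d. of_real ((cmod (U $$ (i,k)))^2)) = (1::complex)"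
    using assms by (simp add: unitary_mat_def)
  then have "(\<Sum>k<d. (cmod (U $$ (i,k)))^2) = 1"
    by (metis of_real_eq_1_iff of_real_sum)
  moreover have "(cmod (U $$ (i,i)))^2 \<le> (\<Sum>k<d. (cmod (U $$ (i,k)))^2)"
    using assms(2) by (intro member_le_sum) auto
  ultimately show ?thesis by (simp add: power_le_one_iff abs_le_square_iff)
qed

lemma norm_trace_unitary_mat_le:
  assumes "unitary_mat d U"
  shows "cmod (mat_trace U) \<le> d"
proof -
  have "U \<in> carrier_mat d d" using assms by (simp add: unitary_mat_def)
  then have "cmod (mat_trace U) \<le> (\<Sum>i<d. cmod (U $$ (i,i)))"
    by (simp add: mat_trace_def norm_sum)
  also have "\<dots> \<le> (\<Sum>i<d. 1)"
    using unitary_mat_diag_norm_le_1[OF assms] by (intro sum_mono) auto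
  finally show ?thesis by simp
qed

lemma pauli1_conj_symmetric: "x < 2 \<Longrightarrow> y < 2 \<Longrightarrow> cnj (pauli1 a $$ (y,x)) = pauli1 a $$ (x,y)"
  by (auto simp: pauli1_def mat_of_rows_list_def less_2_cases_iff)

lemma pauli1_square:
  "x < 2 \<Longrightarrow> y < 2 \<Longrightarrow>
   (\<Sum>b<2. pauli1 a $$ (x,b) * pauli1 a $$ (b,y)) = (if x = y then 1 else 0)"
  by (auto simp: pauli1_def mat_of_rows_list_def numeral_2_eq_2 less_Suc_eq)

lemma sum_lessThan_double:
  fixes G :: "nat \<Rightarrow> 'a::comm_monoid_add"
  shows "(\<Sum>k<2 * m. G k) = (\<Sum>k<m. G k) + (\<Sum>k<m. G (k + m))"
proof -
  have "(\<Sum>k<2 * m. G k) = (\<Sum>k\<in>{0..<m}. G k) + (\<Sum>k\<in>{0 + m..<m + m}. G k)"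
    by (simp add: mult_2 sum.atLeastLessThan_concat atLeast0LessThan[symmetric])
  also have "\<dots> = (\<Sum>k<m. G k) + (\<Sum>k<m. G (k + m))"
    by (simp only: sum.shift_bounds_nat_ivl atLeast0LessThan)
  finally show ?thesis .
qed

lemma binary_digit_add_pow2:
  fixes k n q :: nat assumes "q < n"
  shows "(k + 2^n) div 2^q mod 2 = k div 2^q mod 2"
proof -
  have "(2::nat)^n = 2^q * (2 * 2^(n-q-1))"
    using assms by (simp flip: power_add power_Suc)
  then show ?thesis by simp
qed

lemma sum_binary_digits_prod:
  fixes F :: "nat \<Rightarrow> nat \<Rightarrow> 'a::comm_semiring_1"
  shows "(\<Sum>k<2^n. \<Prod>q<n. F q (k div 2^q mod 2)) = (\<Prod>q<n. F q 0 + F q 1)"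
proof (induction n)
  case 0
  then show ?case by simp
next
  case (Suc n)
  \<comment> \<open>split \<open>k < 2^(n+1)\<close> by its top digit \<open>k div 2^n\<close>\<close>
  have low: "(\<Prod>q<Suc n. F q (k div 2^q mod 2)) = (\<Prod>q<n. F q (k div 2^q mod 2)) * F n 0"
    if "k < 2^n" for k
    using that by simp
  have high: "(\<Prod>q<Suc n. F q ((k + 2^n) div 2^q mod 2)) = (\<Prod>q<n. F q (k div 2^q mod 2)) * F n 1"
    if "k < 2^n" for k
  proof -
    have "(\<Prod>q<n. F q ((k + 2^n) div 2^q mod 2)) = (\<Prod>q<n. F q (k div 2^q mod 2))"
      by (intro prod.cong refl) (simp add: binary_digit_add_pow2)
    then show ?thesis using that by simp
  qed
  have "(\<Sum>k<2^Suc n. \<Prod>q<Suc n. F q (k div 2^q mod 2))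
     = (\<Sum>k<2^n. \<Prod>q<Suc n. F q (k div 2^q mod 2))
       + (\<Sum>k<2^n. \<Prod>q<Suc n. F q ((k + 2^n) div 2^q mod 2))"
    using sum_lessThan_double[of "\<lambda>k. \<Prod>q<Suc n. F q (k div 2^q mod 2)" "2^n"] by simp
  also have "\<dots> = (\<Sum>k<2^n. \<Prod>q<n. F q (k div 2^q mod 2)) * F n 0
                  + (\<Sum>k<2^n. \<Prod>q<n. F q (k div 2^q mod 2)) * F n 1"
    unfolding sum_distrib_right by (intro arg_cong2[where f="(+)"] sum.cong refl low high) auto
  also have "\<dots> = (\<Prod>q<n. F q 0 + F q 1) * (F n 0 + F n 1)"
    by (simp add: Suc distrib_left)
  finally show ?case by simp
qed

lemma binary_digits_eq_imp_eq:
  fixes r c n :: nat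
  assumes "r < 2^n" "c < 2^n" "\<forall>q<n. r div 2^q mod 2 = c div 2^q mod 2"
  shows "r = c"
proof (rule bit_eqI)
  fix q
  show "bit r q = bit c q"
  proof (cases "q < n")
    case True
    then show ?thesis using assms(3) by (simp add: bit_iff_odd odd_iff_mod_2_eq_one)
  next
    case False
    then have "r < 2^q" "c < 2^q"
      using assms(1,2) power_increasing[of n q "2::nat"] by linarith+
    then show ?thesis by (simp add: bit_iff_odd)
  qed
qed

lemma pauli_mat_carrier[simp]: "pauli_mat n P \<in> carrier_mat (2^n) (2^n)"
  by (simp add: pauli_mat_def)

lemma pauli_mat_dim[simp]: "dim_row (pauli_mat n P) = 2^n" "dim_col (pauli_mat n P) = 2^n"
  by (simp_all add: pauli_mat_def)

lemma pauli_mat_hermitian: "conj_transpose (pauli_mat n P) = pauli_mat n P"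
  by (rule eq_matI) (auto simp: pauli_mat_def pauli1_conj_symmetric intro!: prod.cong)

lemma pauli_mat_square: "pauli_mat n P * pauli_mat n P = 1\<^sub>m (2^n)"
proof (rule eq_matI)
  fix r c assume "r < dim_row (1\<^sub>m (2^n) :: complex mat)" "c < dim_col (1\<^sub>m (2^n) :: complex mat)"
  then have r: "r < 2^n" and c: "c < 2^n" by auto
  let ?d = "\<lambda>k q. k div 2^q mod 2"
  have "(pauli_mat n P * pauli_mat n P) $$ (r,c)
      = (\<Sum>k<2^n. \<Prod>q<n. pauli1 (P q) $$ (?d r q, ?d k q) * pauli1 (P q) $$ (?d k q, ?d c q))"
    using r c by (simp add: pauli_mat_def scalar_prod_def atLeast0LessThan prod.distrib)
  also have "\<dots> = (\<Prod>q<n. \<Sum>b<2. pauli1 (P q) $$ (?d r q, b) * pauli1 (P q) $$ (b, ?d c q))"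
    by (subst sum_binary_digits_prod) (simp add: numeral_2_eq_2)
  also have "\<dots> = (\<Prod>q<n. if ?d r q = ?d c q then 1 else 0)"
    by (intro prod.cong refl pauli1_square) auto
  also have "\<dots> = (if r = c then 1 else 0)"
    using binary_digits_eq_imp_eq[OF r c] by auto
  finally show "(pauli_mat n P * pauli_mat n P) $$ (r,c) = 1\<^sub>m (2^n) $$ (r,c)"
    using r c by simp
qed auto

lemma unitary_pauli_mat: "unitary_mat (2^n) (pauli_mat n P)"
  by (simp add: unitary_mat_def pauli_mat_hermitian pauli_mat_square)

lemma hamiltonian_carrier[simp]: "hamiltonian n NH h \<sigma> \<in> carrier_mat (2^n) (2^n)"
  by (simp add: hamiltonian_def)

lemma hamiltonian_hermitian: "conj_transpose (hamiltonian n NH h \<sigma>) = hamiltonian n NH h \<sigma>"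
proof (rule eq_matI)
  fix i j assume "i < dim_row (hamiltonian n NH h \<sigma>)" "j < dim_col (hamiltonian n NH h \<sigma>)"
  then have ij: "i < 2^n" "j < 2^n" by (auto simp: hamiltonian_def)
  have "cnj (pauli_mat n (\<sigma> k) $$ (j,i)) = pauli_mat n (\<sigma> k) $$ (i,j)" for k
    using ij conj_transpose_index[of i "pauli_mat n (\<sigma> k)" j] by (simp add: pauli_mat_hermitian)
  then show "conj_transpose (hamiltonian n NH h \<sigma>) $$ (i,j) = hamiltonian n NH h \<sigma> $$ (i,j)"
    using ij by (simp add: hamiltonian_def)
qed (auto simp: hamiltonian_def)

lemma norm_a_coef_le_1: "cmod (a_coef n NH \<sigma> l) \<le> 1"
proof -
  have "unitary_mat (2^n) (S_op n \<sigma> l)"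
    unfolding S_op_def by (intro unitary_mat_foldl_mult unitary_pauli_mat unitary_mat_one)
  moreover have "unitary_mat (2^n) (T_op n NH \<sigma> l)"
    unfolding T_op_def
    by (intro unitary_mat_foldl_mult unitary_mat_pow unitary_pauli_mat unitary_mat_one)
  ultimately have "cmod (mat_trace (S_op n \<sigma> l * conj_transpose (T_op n NH \<sigma> l))) \<le> real (2^n)"
    by (intro norm_trace_unitary_mat_le unitary_mat_mult unitary_mat_conj_transpose)
  moreover have "mat_trace (1\<^sub>m (2^n)) = 2^n"
    by (simp add: mat_trace_def)
  ultimately show ?thesis
    by (simp add: a_coef_def norm_divide norm_power)
qed

section \<open>Total variation of \<open>f(t,\<cdot>)\<close>\<close>

lemma norm_prod_list: "norm (\<Prod>x\<leftarrow>xs. f x :: 'a::real_normed_div_algebra) = (\<Prod>x\<leftarrow>xs. norm (f x))"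
  by (induction xs) (auto simp: norm_mult)

lemma norm_f_coef_le:
  "cmod (f_coef n NH h \<sigma> t l) \<le> 2 * (\<Prod>q\<leftarrow>l. \<bar>h q\<bar> * \<bar>t\<bar>) / fact (length l)"
proof -
  have "cmod (a_coef n NH \<sigma> l - 1) \<le> 2"
    using norm_a_coef_le_1[of n NH \<sigma> l] norm_triangle_ineq4[of "a_coef n NH \<sigma> l" 1] by simp
  moreover have "0 \<le> (\<Prod>q\<leftarrow>l. \<bar>h q\<bar> * \<bar>t\<bar>)"
    by (rule prod_list_nonneg) auto
  moreover have "cmod (f_coef n NH h \<sigma> t l)
      = (\<Prod>q\<leftarrow>l. \<bar>h q\<bar> * \<bar>t\<bar>) / fact (length l) * cmod (a_coef n NH \<sigma> l - 1)"
    by (simp add: f_coef_def norm_mult norm_divide norm_prod_list abs_mult norm_power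
        flip: prod_norm)
  ultimately have "cmod (f_coef n NH h \<sigma> t l) \<le> (\<Prod>q\<leftarrow>l. \<bar>h q\<bar> * \<bar>t\<bar>) / fact (length l) * 2"
    by (metis mult_left_mono divide_nonneg_pos fact_gt_zero)
  then show ?thesis by (simp add: ac_simps)
qed

lemma sum_lists_length_prod_list:
  fixes w :: "'a \<Rightarrow> 'b::comm_semiring_1"
  assumes "finite A"
  shows "(\<Sum>xs\<in>{xs. set xs \<subseteq> A \<and> length xs = k}. \<Prod>x\<leftarrow>xs. w x) = (\<Sum>x\<in>A. w x) ^ k"
proof (induction k)
  case 0
  have "{xs. set xs \<subseteq> A \<and> length xs = 0} = {[]}" by auto
  then show ?case by simp
next
  case (Suc k)
  let ?L = "{xs. set xs \<subseteq> A \<and> length xs = k}"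
  have "finite ?L" using finite_lists_length_eq[OF assms] .
  have "(\<Sum>xs\<in>{xs. set xs \<subseteq> A \<and> length xs = Suc k}. \<Prod>x\<leftarrow>xs. w x)
      = (\<Sum>(xs, x)\<in>?L \<times> A. \<Prod>y\<leftarrow>x # xs. w y)"
    unfolding lists_length_Suc_eq
    by (subst sum.reindex) (auto simp: inj_on_def case_prod_beta intro!: sum.cong)
  also have "\<dots> = (\<Sum>x\<in>A. w x) * (\<Sum>xs\<in>?L. \<Prod>y\<leftarrow>xs. w y)"
    by (simp add: sum.cartesian_product[symmetric] sum_distrib_left sum_distrib_right
        sum.swap[of _ ?L A])
  finally show ?case using Suc by simp
qed

lemma sum_exp_series_tail_le:
  fixes x :: real assumes "0 \<le> x"
  shows "(\<Sum>k<m. x^(k+2) / fact (k+2)) \<le> exp x - 1 - x"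
proof -
  define g :: "nat \<Rightarrow> real" where "g = (\<lambda>k. inverse (fact (k+2)) *\<^sub>R x^(k+2))"
  have "summable g"
    unfolding g_def using summable_exp[of x]
    by (subst summable_iff_shift[where k=2]) (simp add: field_simps)
  then have "sum g {..<m} \<le> suminf g"
    using assms by (intro sum_le_suminf) (auto simp: g_def)
  also have "suminf g = exp x - 1 - x"
    using exp_first_two_terms[of x] unfolding g_def by linarith
  finally show ?thesis by (simp add: g_def field_simps)
qed

lemma sum_norm_f_coef_le:
  assumes "finite F" "F \<subseteq> L_set NH"
  shows "(\<Sum>l\<in>F. cmod (f_coef n NH h \<sigma> t l)) \<le> 2 * (exp (htot NH h * \<bar>t\<bar>) - 1 - htot NH h * \<bar>t\<bar>)"
proof -
  define x where "x = htot NH h * \<bar>t\<bar>"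
  have "0 \<le> x" by (simp add: x_def htot_def sum_nonneg)
  define L where "L k = {xs. set xs \<subseteq> {1..NH} \<and> length xs = k}" for k
  define w where "w l = 2 * (\<Prod>q\<leftarrow>l. \<bar>h q\<bar> * \<bar>t\<bar>) / fact (length l)" for l
  have finite_L: "finite (L k)" for k
    unfolding L_def by (rule finite_lists_length_eq) simp
  have w_nonneg: "0 \<le> w l" for l
    unfolding w_def by (intro divide_nonneg_pos mult_nonneg_nonneg prod_list_nonneg) auto
  obtain m where "\<forall>l\<in>F. length l < m + 2"
  proof -
    obtain m where "\<forall>l\<in>F. length l < m"
      using finite_nat_set_iff_bounded[of "length ` F"] assms(1) by auto
    then have "\<forall>l\<in>F. length l < m + 2" by auto
    then show thesis by (rule that)
  qed
  have F_cover: "F \<subseteq> (\<Union>k<m. L (k+2))"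
  proof
    fix l assume "l \<in> F"
    then have "2 \<le> length l" "length l < m + 2" "set l \<subseteq> {1..NH}"
      using assms(2) \<open>\<forall>l\<in>F. length l < m + 2\<close> by (auto simp: L_set_def)
    then have "length l - 2 < m" "l \<in> L (length l - 2 + 2)"
      by (auto simp: L_def)
    then show "l \<in> (\<Union>k<m. L (k+2))" by blast
  qed
  have "(\<Sum>l\<in>F. cmod (f_coef n NH h \<sigma> t l)) \<le> (\<Sum>l\<in>F. w l)"
    unfolding w_def by (intro sum_mono norm_f_coef_le)
  also have "\<dots> \<le> (\<Sum>l\<in>(\<Union>k<m. L (k+2)). w l)"
    using F_cover finite_L w_nonneg by (intro sum_mono2) auto
  also have "\<dots> = (\<Sum>k<m. \<Sum>l\<in>L (k+2). w l)"
    using finite_L by (intro sum.UNION_disjoint) (auto simp: L_def)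
  also have "\<dots> = (\<Sum>k<m. 2 * (x^(k+2) / fact (k+2)))"
  proof (intro sum.cong refl)
    fix k
    have "(\<Sum>l\<in>L (k+2). \<Prod>q\<leftarrow>l. \<bar>h q\<bar> * \<bar>t\<bar>) = x^(k+2)"
      unfolding L_def x_def htot_def
      by (simp add: sum_lists_length_prod_list sum_distrib_right)
    moreover have "(\<Sum>l\<in>L (k+2). w l) = 2 / fact (k+2) * (\<Sum>l\<in>L (k+2). \<Prod>q\<leftarrow>l. \<bar>h q\<bar> * \<bar>t\<bar>)"
      by (simp add: w_def L_def sum_distrib_left)
    ultimately show "(\<Sum>l\<in>L (k+2). w l) = 2 * (x^(k+2) / fact (k+2))"
      by simp
  qed
  also have "\<dots> \<le> 2 * (exp x - 1 - x)"
    unfolding sum_distrib_left[symmetric]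
    by (rule mult_left_mono[OF sum_exp_series_tail_le[OF \<open>0 \<le> x\<close>]]) simp
  finally show ?thesis by (simp add: x_def)
qed

lemma norm_f_coef_summable_on: "(\<lambda>l. cmod (f_coef n NH h \<sigma> t l)) summable_on L_set NH"
  by (rule nonneg_bdd_above_summable_on) (auto intro!: bdd_aboveI sum_norm_f_coef_le)

lemma infsum_norm_f_coef_le:
  "(\<Sum>\<^sub>\<infinity>l\<in>L_set NH. cmod (f_coef n NH h \<sigma> t l))
   \<le> 2 * (exp (htot NH h * \<bar>t\<bar>) - 1 - htot NH h * \<bar>t\<bar>)"
  by (rule infsum_le_finite_sums[OF norm_f_coef_summable_on sum_norm_f_coef_le])

definition f_base_point :: "nat \<Rightarrow> (nat \<Rightarrow> real) \<Rightarrow> real \<Rightarrow> real list" where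
  "f_base_point NH h t = map (\<lambda>j. h j * t) [1..<NH+1]"

definition f_fibre :: "nat \<Rightarrow> real list \<Rightarrow> nat list set" where
  "f_fibre NH y = {l \<in> L_set NH. f_point NH l = y}"

definition f_series_mass ::
    "nat \<Rightarrow> nat \<Rightarrow> (nat \<Rightarrow> real) \<Rightarrow> (nat \<Rightarrow> nat \<Rightarrow> nat) \<Rightarrow> real \<Rightarrow> real list \<Rightarrow> complex" where
  "f_series_mass n NH h \<sigma> t y = (\<Sum>\<^sub>\<infinity>l\<in>f_fibre NH y. f_coef n NH h \<sigma> t l)"

lemma f_mass_eq:
  "f_mass n NH h \<sigma> t y = (if y = f_base_point NH h t then 1 else 0) + f_series_mass n NH h \<sigma> t y"
proof -
  have "(\<Sum>\<^sub>\<infinity>l\<in>L_set NH. if f_point NH l = y then f_coef n NH h \<sigma> t l else 0) = f_series_mass n NH h \<sigma> t y"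
    unfolding f_series_mass_def by (rule infsum_cong_neutral) (auto simp: f_fibre_def)
  then show ?thesis by (simp add: f_mass_def f_base_point_def)
qed

lemma f_fibre_subset: "f_fibre NH y \<subseteq> L_set NH"
  by (auto simp: f_fibre_def)

lemma norm_f_coef_summable_on_subset:
  "A \<subseteq> L_set NH \<Longrightarrow> (\<lambda>l. cmod (f_coef n NH h \<sigma> t l)) summable_on A"
  by (rule summable_on_subset_banach[OF norm_f_coef_summable_on])

lemma infsum_norm_f_coef_mono:
  "A \<subseteq> L_set NH \<Longrightarrow>
   (\<Sum>\<^sub>\<infinity>l\<in>A. cmod (f_coef n NH h \<sigma> t l)) \<le> (\<Sum>\<^sub>\<infinity>l\<in>L_set NH. cmod (f_coef n NH h \<sigma> t l))"
  by (rule infsum_mono_neutral[OF norm_f_coef_summable_on_subset norm_f_coef_summable_on]) auto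

lemma norm_f_series_mass_le:
  "cmod (f_series_mass n NH h \<sigma> t y) \<le> (\<Sum>\<^sub>\<infinity>l\<in>f_fibre NH y. cmod (f_coef n NH h \<sigma> t l))"
  unfolding f_series_mass_def
  by (rule norm_infsum_bound[OF norm_f_coef_summable_on_subset[OF f_fibre_subset]])

lemma sum_norm_f_mass_le:
  assumes "finite Y"
  shows "(\<Sum>y\<in>Y. cmod (f_mass n NH h \<sigma> t y)) \<le> 1 + (\<Sum>\<^sub>\<infinity>l\<in>L_set NH. cmod (f_coef n NH h \<sigma> t l))"
proof -
  let ?z = "f_base_point NH h t"
  have "(\<Sum>y\<in>Y. cmod (f_mass n NH h \<sigma> t y))
      \<le> (\<Sum>y\<in>Y. (if y = ?z then 1 else 0) + cmod (f_series_mass n NH h \<sigma> t y))"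
    unfolding f_mass_eq by (intro sum_mono) (auto intro: norm_triangle_le)
  also have "\<dots> = (\<Sum>y\<in>Y. if y = ?z then 1 else 0) + (\<Sum>y\<in>Y. cmod (f_series_mass n NH h \<sigma> t y))"
    by (rule sum.distrib)
  also have "(\<Sum>y\<in>Y. if y = ?z then 1 else 0 :: real) \<le> 1"
    using assms by (simp add: sum.delta')
  also have "(\<Sum>y\<in>Y. cmod (f_series_mass n NH h \<sigma> t y))
             \<le> (\<Sum>y\<in>Y. \<Sum>\<^sub>\<infinity>l\<in>f_fibre NH y. cmod (f_coef n NH h \<sigma> t l))"
    by (intro sum_mono norm_f_series_mass_le)
  \<comment> \<open>the fibres are disjoint\<close>
  also have "\<dots> = (\<Sum>\<^sub>\<infinity>l\<in>(\<Union>y\<in>Y. f_fibre NH y). cmod (f_coef n NH h \<sigma> t l))"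
    using assms f_fibre_subset
    by (intro sum_infsum norm_f_coef_summable_on_subset) (auto simp: f_fibre_def)
  also have "\<dots> \<le> (\<Sum>\<^sub>\<infinity>l\<in>L_set NH. cmod (f_coef n NH h \<sigma> t l))"
    by (rule infsum_norm_f_coef_mono) (auto simp: f_fibre_def)
  finally show ?thesis by simp
qed

lemma norm_f_mass_summable_on: "(\<lambda>y. cmod (f_mass n NH h \<sigma> t y)) summable_on A"
proof (rule summable_on_subset_banach)
  show "(\<lambda>y. cmod (f_mass n NH h \<sigma> t y)) summable_on UNIV"
    by (rule nonneg_bdd_above_summable_on) (auto intro!: bdd_aboveI sum_norm_f_mass_le)
qed simp

lemma f_TV_nonneg: "0 \<le> f_TV n NH h \<sigma> t"
  unfolding f_TV_def by (rule infsum_nonneg) simp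

lemma f_TV_le: "f_TV n NH h \<sigma> t \<le> tv_majorant (htot NH h * \<bar>t\<bar>)"
proof -
  have "f_TV n NH h \<sigma> t \<le> 1 + (\<Sum>\<^sub>\<infinity>l\<in>L_set NH. cmod (f_coef n NH h \<sigma> t l))"
    unfolding f_TV_def by (rule infsum_le_finite_sums[OF norm_f_mass_summable_on sum_norm_f_mass_le])
  then show ?thesis
    using infsum_norm_f_coef_le[of n NH h \<sigma> t] by (simp add: tv_majorant_def)
qed

lemma f_TV_ge: "2 - tv_majorant (htot NH h * \<bar>t\<bar>) \<le> f_TV n NH h \<sigma> t"
proof -
  let ?z = "f_base_point NH h t"
  have "cmod (f_mass n NH h \<sigma> t ?z) = (\<Sum>\<^sub>\<infinity>y\<in>{?z}. cmod (f_mass n NH h \<sigma> t y))"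
    by simp
  also have "\<dots> \<le> f_TV n NH h \<sigma> t"
    unfolding f_TV_def by (rule infsum_mono_neutral[OF norm_f_mass_summable_on norm_f_mass_summable_on]) auto
  finally have "cmod (f_mass n NH h \<sigma> t ?z) \<le> f_TV n NH h \<sigma> t" .
  moreover have "1 - cmod (f_series_mass n NH h \<sigma> t ?z) \<le> cmod (f_mass n NH h \<sigma> t ?z)"
    unfolding f_mass_eq using norm_triangle_ineq2[of 1 "- f_series_mass n NH h \<sigma> t ?z"] by simp
  moreover have "cmod (f_series_mass n NH h \<sigma> t ?z) \<le> (\<Sum>\<^sub>\<infinity>l\<in>L_set NH. cmod (f_coef n NH h \<sigma> t l))"
    using norm_f_series_mass_le infsum_norm_f_coef_mono[OF f_fibre_subset] by (rule order_trans)
  ultimately show ?thesis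
    using infsum_norm_f_coef_le[of n NH h \<sigma> t] by (simp add: tv_majorant_def)
qed

lemma borel_measurable_infsum:
  fixes F :: "'i \<Rightarrow> 'a \<Rightarrow> 'b::{banach, second_countable_topology}"
  assumes "countable I"
    and measurable: "\<And>i. i \<in> I \<Longrightarrow> (\<lambda>x. F i x) \<in> borel_measurable M"
    and summable: "\<And>x. (\<lambda>i. norm (F i x)) summable_on I"
  shows "(\<lambda>x. \<Sum>\<^sub>\<infinity>i\<in>I. F i x) \<in> borel_measurable M"
proof (cases "finite I")
  case True
  then show ?thesis using measurable by simp
next
  case False
  \<comment> \<open>enumerate \<open>I\<close> and use the measurability of ordinary series\<close>
  define e where "e = from_nat_into I"
  have e: "bij_betw e UNIV I"
    unfolding e_def using \<open>countable I\<close> False by (rule bij_betw_from_nat_into)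
  have "(\<Sum>\<^sub>\<infinity>i\<in>I. F i x) = (\<Sum>k. F (e k) x)" for x
  proof -
    have "(\<lambda>k. norm (F (e k) x)) summable_on UNIV"
      using summable_on_reindex_bij_betw[OF e, of "\<lambda>i. norm (F i x)"] summable by simp
    then have "(\<lambda>k. F (e k) x) summable_on UNIV"
      by (rule abs_summable_summable)
    then have "(\<lambda>k. F (e k) x) sums (\<Sum>\<^sub>\<infinity>k. F (e k) x)"
      by (simp add: has_sum_imp_sums)
    then show ?thesis
      using infsum_reindex_bij_betw[OF e, of "\<lambda>i. F i x"] by (simp add: sums_iff)
  qed
  moreover have "(\<lambda>x. \<Sum>k. F (e k) x) \<in> borel_measurable M"
    using e by (intro borel_measurable_suminf measurable) (auto simp: bij_betw_def)
  ultimately show ?thesis by simp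
qed

lemma borel_measurable_f_coef[measurable]: "(\<lambda>t. f_coef n NH h \<sigma> t l) \<in> borel_measurable borel"
proof -
  have "(\<lambda>t::real. \<Prod>q\<leftarrow>l. - \<i> * complex_of_real (h q * t)) \<in> borel_measurable borel"
    by (induction l) auto
  then show ?thesis
    unfolding f_coef_def by measurable
qed

lemma borel_measurable_f_series_mass[measurable]:
  "(\<lambda>t. f_series_mass n NH h \<sigma> t y) \<in> borel_measurable borel"
  unfolding f_series_mass_def
  by (rule borel_measurable_infsum[OF countable_subset[OF f_fibre_subset]])
     (auto intro: norm_f_coef_summable_on_subset[OF f_fibre_subset])

lemma closed_f_base_point_eq: "closed {t. f_base_point NH h t = y}"
proof -
  have "{t. f_base_point NH h t = y} = {t. length y = NH \<and> (\<forall>i. i < NH \<longrightarrow> h (Suc i) * t = y ! i)}"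
    by (auto simp: f_base_point_def list_eq_iff_nth_eq simp del: upt_Suc)
  also have "closed \<dots>"
    by (intro closed_Collect_conj closed_Collect_const closed_Collect_all closed_Collect_imp
        open_Collect_const closed_Collect_eq continuous_intros)
  finally show ?thesis .
qed

lemma borel_measurable_f_mass[measurable]: "(\<lambda>t. f_mass n NH h \<sigma> t y) \<in> borel_measurable borel"
proof -
  have "(\<lambda>t. f_mass n NH h \<sigma> t y)
        = (\<lambda>t. indicator {t. f_base_point NH h t = y} t + f_series_mass n NH h \<sigma> t y)"
    by (auto simp: f_mass_eq indicator_def)
  moreover have "{t. f_base_point NH h t = y} \<in> sets borel"
    by (rule borel_closed[OF closed_f_base_point_eq])
  ultimately show ?thesis by simp
qed

text \<open>Off the countable set of points \<open>f_point ` L_set NH\<close> only the base point can carry mass.\<close>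

lemma f_TV_eq:
  "f_TV n NH h \<sigma> t = (\<Sum>\<^sub>\<infinity>y\<in>f_point NH ` L_set NH. cmod (f_mass n NH h \<sigma> t y))
     + (if f_base_point NH h t \<in> f_point NH ` L_set NH then 0 else 1)"
proof -
  let ?S = "f_point NH ` L_set NH"
  let ?z = "f_base_point NH h t"
  have mass_off_S: "f_mass n NH h \<sigma> t y = (if y = ?z then 1 else 0)" if "y \<notin> ?S" for y
  proof -
    have "f_fibre NH y = {}" using that by (auto simp: f_fibre_def)
    then show ?thesis by (simp add: f_mass_eq f_series_mass_def)
  qed
  have "f_TV n NH h \<sigma> t = (\<Sum>\<^sub>\<infinity>y\<in>insert ?z ?S. cmod (f_mass n NH h \<sigma> t y))"
    unfolding f_TV_def by (rule infsum_cong_neutral) (auto simp: mass_off_S)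
  also have "\<dots> = (\<Sum>\<^sub>\<infinity>y\<in>?S. cmod (f_mass n NH h \<sigma> t y)) + (if ?z \<in> ?S then 0 else 1)"
    by (cases "?z \<in> ?S") (simp_all add: insert_absorb infsum_insert norm_f_mass_summable_on mass_off_S)
  finally show ?thesis .
qed

lemma borel_measurable_f_TV[measurable]: "(\<lambda>t. f_TV n NH h \<sigma> t) \<in> borel_measurable borel"
proof -
  let ?S = "f_point NH ` L_set NH"
  have "countable ?S" by simp
  then have "(\<lambda>t. \<Sum>\<^sub>\<infinity>y\<in>?S. cmod (f_mass n NH h \<sigma> t y)) \<in> borel_measurable borel"
    by (intro borel_measurable_infsum) (simp_all add: norm_f_mass_summable_on)
  moreover have "Measurable.pred borel (\<lambda>t. f_base_point NH h t \<in> ?S)"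
  proof -
    have "{t. f_base_point NH h t \<in> ?S} = (\<Union>y\<in>?S. {t. f_base_point NH h t = y})" by blast
    then show ?thesis
      using \<open>countable ?S\<close> closed_f_base_point_eq
      by (auto simp: pred_def intro: sets.countable_UN' borel_closed)
  qed
  ultimately show ?thesis
    unfolding f_TV_eq[abs_def] by measurable
qed

section \<open>The normalisation constant\<close>

definition normalisation :: "nat \<Rightarrow> nat \<Rightarrow> (nat \<Rightarrow> real) \<Rightarrow> (nat \<Rightarrow> nat \<Rightarrow> nat) \<Rightarrow> real \<Rightarrow> nat \<Rightarrow> real" where
  "normalisation n NH h \<sigma> s N = (LINT t|lborel. exp (- ((t / s)^2) / 2) * f_TV n NH h \<sigma> t ^ N)"

lemma htot_nonneg: "0 \<le> htot NH h"
  by (simp add: htot_def sum_nonneg)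

lemma has_bochner_integral_rescaled_gaussian_tv:
  fixes s b :: real assumes "0 < s" "0 \<le> b"
  shows "has_bochner_integral lborel (\<lambda>t. exp (- ((t / s)^2) / 2) * tv_majorant (b * \<bar>t\<bar>) ^ N)
           (s * gaussian_tv_integral (b * s) N)"
proof -
  define B :: "real \<Rightarrow> real" where "B = (\<lambda>t. exp (- ((t / s)^2) / 2) * tv_majorant (b * \<bar>t\<bar>) ^ N)"
  have B_scaled: "B (s * u) = exp (- (u^2) / 2) * tv_majorant (b * s * \<bar>u\<bar>) ^ N" for u
    using assms by (simp add: B_def abs_mult mult_ac)
  have "integrable lborel (\<lambda>u. B (s * u))"
    unfolding B_scaled using assms by (intro integrable_gaussian_tv_majorant) simp
  then have "integrable lborel B"
    using lborel_integrable_real_affine_iff[of s B 0] assms by simp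
  moreover have "integral\<^sup>L lborel B = s * gaussian_tv_integral (b * s) N"
    using lborel_integral_real_affine[of s B 0] assms
    by (simp add: B_scaled gaussian_tv_integral_def)
  ultimately show ?thesis
    by (simp add: has_bochner_integral_iff B_def)
qed

lemma f_TV_power_le: "f_TV n NH h \<sigma> t ^ N \<le> tv_majorant (htot NH h * \<bar>t\<bar>) ^ N"
  by (intro power_mono f_TV_le f_TV_nonneg)

lemma integrable_normalisation:
  fixes s :: real assumes "0 < s"
  shows "integrable lborel (\<lambda>t. exp (- ((t / s)^2) / 2) * f_TV n NH h \<sigma> t ^ N)"
proof (rule Bochner_Integration.integrable_bound)
  show "integrable lborel (\<lambda>t. exp (- ((t / s)^2) / 2) * tv_majorant (htot NH h * \<bar>t\<bar>) ^ N)"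
    using has_bochner_integral_rescaled_gaussian_tv[OF assms htot_nonneg]
    by (rule integrable.intros)
  show "AE t in lborel. norm (exp (- ((t / s)^2) / 2) * f_TV n NH h \<sigma> t ^ N)
          \<le> norm (exp (- ((t / s)^2) / 2) * tv_majorant (htot NH h * \<bar>t\<bar>) ^ N)"
  proof (intro AE_I2)
    fix t
    have "0 \<le> tv_majorant (htot NH h * \<bar>t\<bar>)"
      using tv_majorant_ge_1 order_trans zero_le_one by blast
    then show "norm (exp (- ((t / s)^2) / 2) * f_TV n NH h \<sigma> t ^ N)
               \<le> norm (exp (- ((t / s)^2) / 2) * tv_majorant (htot NH h * \<bar>t\<bar>) ^ N)"
      using f_TV_power_le f_TV_nonneg by (simp add: abs_mult)
  qed
qed measurable

lemma normalisation_le: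
  fixes s :: real assumes "0 < s"
  shows "normalisation n NH h \<sigma> s N \<le> s * gaussian_tv_integral (htot NH h * s) N"
proof -
  note majorant = has_bochner_integral_rescaled_gaussian_tv[OF assms htot_nonneg, of NH h N]
  have "normalisation n NH h \<sigma> s N
        \<le> (LINT t|lborel. exp (- ((t / s)^2) / 2) * tv_majorant (htot NH h * \<bar>t\<bar>) ^ N)"
    unfolding normalisation_def
    using integrable_normalisation[OF assms] integrable.intros[OF majorant]
    by (intro integral_mono) (auto intro!: f_TV_power_le)
  also have "\<dots> = s * gaussian_tv_integral (htot NH h * s) N"
    using majorant by (rule has_bochner_integral_integral_eq)
  finally show ?thesis .
qed

lemma tv_majorant_le_3_halves:
  fixes x :: real assumes "0 \<le> x" "x \<le> 1/2"
  shows "tv_majorant x \<le> 3/2"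
proof -
  have "exp x \<le> 1 + x + x^2" using exp_bound assms by simp
  moreover have "x^2 \<le> (1/2)^2" using assms by (intro power_mono) auto
  ultimately show ?thesis by (simp add: tv_majorant_def power2_eq_square)
qed

lemma f_TV_ge_half:
  assumes "htot NH h * \<bar>t\<bar> \<le> 1/2"
  shows "1/2 \<le> f_TV n NH h \<sigma> t"
  using f_TV_ge[of NH h t n \<sigma>] tv_majorant_le_3_halves[OF _ assms] htot_nonneg[of NH h] by simp

lemma normalisation_pos:
  fixes s :: real assumes "0 < s"
  shows "0 < normalisation n NH h \<sigma> s N"
proof -
  define \<delta> where "\<delta> = 1 / (2 * (htot NH h + 1))"
  have "0 < \<delta>" using htot_nonneg[of NH h] by (simp add: \<delta>_def)
  define \<epsilon> where "\<epsilon> = exp (- ((\<delta> / s)^2) / 2) * (1/2) ^ N"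
  have lower: "\<epsilon> * indicator {-\<delta>..\<delta>} t \<le> exp (- ((t / s)^2) / 2) * f_TV n NH h \<sigma> t ^ N" for t
  proof (cases "t \<in> {-\<delta>..\<delta>}")
    case False
    then show ?thesis using f_TV_nonneg by simp
  next
    case True
    then have "\<bar>t\<bar> \<le> \<delta>" by auto
    have "htot NH h * \<bar>t\<bar> \<le> htot NH h * \<delta>"
      using \<open>\<bar>t\<bar> \<le> \<delta>\<close> htot_nonneg by (rule mult_left_mono)
    also have "\<dots> \<le> 1/2"
      using htot_nonneg[of NH h] by (simp add: \<delta>_def field_simps)
    finally have "(1/2) ^ N \<le> f_TV n NH h \<sigma> t ^ N"
      by (intro power_mono f_TV_ge_half) auto
    moreover have "(t / s)^2 \<le> (\<delta> / s)^2"
      using power_mono[OF \<open>\<bar>t\<bar> \<le> \<delta>\<close> abs_ge_zero, of 2] assms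
      by (simp add: power_divide divide_right_mono)
    ultimately show ?thesis
      using True by (simp add: \<epsilon>_def mult_mono)
  qed
  have "0 < \<epsilon> * (2 * \<delta>)"
    using \<open>0 < \<delta>\<close> by (simp add: \<epsilon>_def)
  also have "\<epsilon> * (2 * \<delta>) = (LINT t|lborel. \<epsilon> * indicator {-\<delta>..\<delta>} t)"
    using \<open>0 < \<delta>\<close> by simp
  also have "\<dots> \<le> normalisation n NH h \<sigma> s N"
    unfolding normalisation_def using \<open>0 < \<delta>\<close> lower
    by (intro integral_mono integrable_normalisation assms integrable_mult_right integrable_real_indicator)
       auto
  finally show ?thesis .
qed

section \<open>The Gaussian filter fixes the ground-state component\<close>

lemma pow_mat_mult_comm: "A \<in> carrier_mat d d \<Longrightarrow> A * A ^\<^sub>m k = A ^\<^sub>m k * A"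
proof (induction k)
  case 0
  then show ?case by simp
next
  case (Suc k)
  have "A * A ^\<^sub>m Suc k = (A * A ^\<^sub>m k) * A"
    using assoc_mult_mat[OF Suc.prems pow_carrier_mat[OF Suc.prems] Suc.prems] by simp
  then show ?case using Suc by simp
qed

lemma norm_pow_mat_index_le:
  fixes A :: "complex mat"
  assumes A: "A \<in> carrier_mat d d" and "i < d" "j < d"
  shows "cmod ((A ^\<^sub>m k) $$ (i,j)) \<le> (\<Sum>a<d. \<Sum>b<d. cmod (A $$ (a,b))) ^ k"
  using \<open>j < d\<close>
proof (induction k arbitrary: j)
  case 0
  then show ?case using A \<open>i < d\<close> by auto
next
  case (Suc k)
  let ?s = "\<Sum>a<d. \<Sum>b<d. cmod (A $$ (a,b))"
  have "cmod ((A ^\<^sub>m Suc k) $$ (i,j)) = cmod (\<Sum>l<d. (A ^\<^sub>m k) $$ (i,l) * A $$ (l,j))"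
    using A \<open>i < d\<close> Suc.prems by (simp add: scalar_prod_def atLeast0LessThan)
  also have "\<dots> \<le> (\<Sum>l<d. cmod ((A ^\<^sub>m k) $$ (i,l)) * cmod (A $$ (l,j)))"
    by (simp add: norm_mult order_trans[OF norm_sum])
  also have "\<dots> \<le> (\<Sum>l<d. ?s ^ k * cmod (A $$ (l,j)))"
    by (intro sum_mono mult_right_mono) (auto intro: Suc.IH)
  also have "\<dots> = ?s ^ k * (\<Sum>l<d. cmod (A $$ (l,j)))"
    by (simp add: sum_distrib_left)
  also have "\<dots> \<le> ?s ^ k * ?s"
    using Suc.prems
    by (intro mult_left_mono sum_mono member_le_sum) (auto intro!: sum_nonneg zero_le_power)
  finally show ?case by (simp add: mult.commute)
qed

lemma mat_exp_index_sums:
  fixes A :: "complex mat"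
  assumes A: "A \<in> carrier_mat d d" and "i < d" "j < d"
  shows "(\<lambda>k. (A ^\<^sub>m k) $$ (i,j) / of_nat (fact k)) sums (mat_exp A $$ (i,j))"
proof -
  let ?s = "\<Sum>a<d. \<Sum>b<d. cmod (A $$ (a,b))"
  have "summable (\<lambda>k. ?s ^ k / fact k)"
    using summable_exp[of ?s] by (simp add: field_simps)
  then have "summable (\<lambda>k. (A ^\<^sub>m k) $$ (i,j) / of_nat (fact k))"
    by (rule summable_comparison_test')
       (use norm_pow_mat_index_le[OF assms] in \<open>simp add: norm_divide divide_right_mono\<close>)
  then show ?thesis
    using assms by (simp add: mat_exp_def summable_sums)
qed

lemma mat_exp_dim[simp]: "dim_row (mat_exp A) = dim_row A" "dim_col (mat_exp A) = dim_col A"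
  by (simp_all add: mat_exp_def)

lemma mat_exp_carrier[simp]: "A \<in> carrier_mat d d \<Longrightarrow> mat_exp A \<in> carrier_mat d d"
  unfolding carrier_mat_def mat_exp_def by simp

lemma vinner_mat_exp_sums:
  fixes A :: "complex mat"
  assumes A: "A \<in> carrier_mat d d" and g: "g \<in> carrier_vec d" and x: "x \<in> carrier_vec d"
  shows "(\<lambda>k. vinner g (A ^\<^sub>m k *\<^sub>v x) / of_nat (fact k)) sums vinner g (mat_exp A *\<^sub>v x)"
proof -
  have "(\<lambda>k. \<Sum>i<d. \<Sum>j<d. cnj (g $ i) * ((A ^\<^sub>m k) $$ (i,j) / of_nat (fact k)) * x $ j)
        sums (\<Sum>i<d. \<Sum>j<d. cnj (g $ i) * mat_exp A $$ (i,j) * x $ j)"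
    by (intro sums_sum sums_mult sums_mult2 mat_exp_index_sums[OF A]) auto
  moreover have "(\<Sum>i<d. \<Sum>j<d. cnj (g $ i) * ((A ^\<^sub>m k) $$ (i,j) / of_nat (fact k)) * x $ j)
      = vinner g (A ^\<^sub>m k *\<^sub>v x) / of_nat (fact k)" for k
    using A g x
    by (simp add: vinner_def scalar_prod_def atLeast0LessThan sum_divide_distrib sum_distrib_left mult_ac)
  moreover have "(\<Sum>i<d. \<Sum>j<d. cnj (g $ i) * mat_exp A $$ (i,j) * x $ j) = vinner g (mat_exp A *\<^sub>v x)"
    using A g x by (simp add: vinner_def scalar_prod_def atLeast0LessThan sum_distrib_left mult_ac)
  ultimately show ?thesis by simp
qed

lemma vinner_mult_mat_vec:
  fixes B :: "complex mat"
  assumes B: "B \<in> carrier_mat d d" and g: "g \<in> carrier_vec d" and y: "y \<in> carrier_vec d"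
  shows "vinner g (B *\<^sub>v y) = vinner (conj_transpose B *\<^sub>v g) y"
proof -
  have "vinner g (B *\<^sub>v y) = (\<Sum>i<d. \<Sum>j<d. cnj (g $ i) * B $$ (i,j) * y $ j)"
    using B g y by (simp add: vinner_def scalar_prod_def atLeast0LessThan sum_distrib_left mult_ac)
  also have "\<dots> = (\<Sum>j<d. \<Sum>i<d. cnj (g $ i) * B $$ (i,j) * y $ j)"
    by (rule sum.swap)
  also have "\<dots> = vinner (conj_transpose B *\<^sub>v g) y"
    using B g y
    by (simp add: vinner_def scalar_prod_def atLeast0LessThan sum_distrib_right sum_distrib_left mult_ac)
  finally show ?thesis .
qed

text \<open>Only the \<open>k = 0\<close> term of the exponential series survives the pairing with \<open>g\<close>.\<close>

lemma vinner_mat_exp_eq: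
  fixes A :: "complex mat"
  assumes A: "A \<in> carrier_mat d d" and g: "g \<in> carrier_vec d" and x: "x \<in> carrier_vec d"
    and kernel: "conj_transpose A *\<^sub>v g = 0\<^sub>v d"
  shows "vinner g (mat_exp A *\<^sub>v x) = vinner g x"
proof -
  have "vinner g (A ^\<^sub>m k *\<^sub>v x) / of_nat (fact k) = (if k = 0 then vinner g x else 0)" for k
  proof (cases k)
    case 0
    then show ?thesis using A x by simp
  next
    case (Suc m)
    have "A ^\<^sub>m k = A * A ^\<^sub>m m"
      using Suc pow_mat_mult_comm[OF A] by simp
    then have "A ^\<^sub>m k *\<^sub>v x = A *\<^sub>v (A ^\<^sub>m m *\<^sub>v x)"
      using assoc_mult_mat_vec[OF A pow_carrier_mat[OF A] x] by simp
    then have "vinner g (A ^\<^sub>m k *\<^sub>v x) = vinner (conj_transpose A *\<^sub>v g) (A ^\<^sub>m m *\<^sub>v x)"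
      using vinner_mult_mat_vec[OF A g mult_mat_vec_carrier[OF pow_carrier_mat[OF A] x]] by simp
    then show ?thesis
      using Suc by (simp add: kernel vinner_def)
  qed
  then have "(\<lambda>k. vinner g (A ^\<^sub>m k *\<^sub>v x) / of_nat (fact k)) sums vinner g x"
    using sums_single[of 0 "\<lambda>_. vinner g x"] by simp
  then show ?thesis
    using vinner_mat_exp_sums[OF A g x] sums_unique2 by blast
qed

lemma norm_vinner_sq_le:
  assumes "g \<in> carrier_vec d" "y \<in> carrier_vec d"
  shows "(cmod (vinner g y))^2 \<le> vnorm2 g * vnorm2 y"
proof -
  have "cmod (vinner g y) \<le> (\<Sum>i<d. cmod (g $ i) * cmod (y $ i))"
    using assms by (simp add: vinner_def norm_mult order_trans[OF norm_sum])
  then have "(cmod (vinner g y))^2 \<le> (\<Sum>i<d. cmod (g $ i) * cmod (y $ i))^2"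
    by (intro power_mono) auto
  also have "\<dots> \<le> (\<Sum>i<d. (cmod (g $ i))^2) * (\<Sum>i<d. (cmod (y $ i))^2)"
    by (rule Cauchy_Schwarz_ineq_sum)
  finally show ?thesis
    using assms by (simp add: vnorm2_def)
qed

lemma vinner_smult_right: "dim_vec v = dim_vec g \<Longrightarrow> vinner g (c \<cdot>\<^sub>v v) = c * vinner g v"
  by (simp add: vinner_def sum_distrib_left mult_ac)

lemma smult_mat_mult_vec: "dim_vec v = dim_col M \<Longrightarrow> (c \<cdot>\<^sub>m M) *\<^sub>v v = c \<cdot>\<^sub>v (M *\<^sub>v v)"
  by (intro eq_vecI) (auto simp: scalar_prod_def sum_distrib_left mult_ac)

lemma vnorm2_gaussian_filter_ge:
  fixes H :: "complex mat" and E r s :: real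
  assumes H: "H \<in> carrier_mat d d" and hermitian: "conj_transpose H = H"
    and ground: "eigenvector H \<Psi>g (complex_of_real E)" and "vnorm2 \<Psi>g = 1"
    and "\<Psi>0 \<in> carrier_vec d"
  defines "K \<equiv> H - complex_of_real E \<cdot>\<^sub>m 1\<^sub>m d"
  shows "s^2 * (cmod (vinner \<Psi>g \<Psi>0))^2
         \<le> vnorm2 (complex_of_real s \<cdot>\<^sub>v (mat_exp (complex_of_real r \<cdot>\<^sub>m (K * K)) *\<^sub>v \<Psi>0))"
proof -
  define A where "A = complex_of_real r \<cdot>\<^sub>m (K * K)"
  have E: "complex_of_real E \<cdot>\<^sub>m 1\<^sub>m d \<in> carrier_mat d d" by simp
  have K: "K \<in> carrier_mat d d" unfolding K_def using E by (rule minus_carrier_mat)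
  have A: "A \<in> carrier_mat d d" unfolding A_def using K by simp
  have g: "\<Psi>g \<in> carrier_vec d" and "H *\<^sub>v \<Psi>g = complex_of_real E \<cdot>\<^sub>v \<Psi>g"
    using ground H unfolding eigenvector_def by auto
  then have "K *\<^sub>v \<Psi>g = 0\<^sub>v d"
    unfolding K_def using H E by (simp add: minus_mult_distrib_mat_vec smult_mat_mult_vec)
  moreover have "conj_transpose K = K"
    unfolding K_def conj_transpose_minus[OF H E] hermitian conj_transpose_smult by simp
  ultimately have "conj_transpose A *\<^sub>v \<Psi>g = 0\<^sub>v d"
    using K g by (auto simp: A_def conj_transpose_smult conj_transpose_mult[OF K K] smult_mat_mult_vec)
  then have overlap: "vinner \<Psi>g (mat_exp A *\<^sub>v \<Psi>0) = vinner \<Psi>g \<Psi>0"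
    by (rule vinner_mat_exp_eq[OF A g \<open>\<Psi>0 \<in> carrier_vec d\<close>])
  have filtered: "mat_exp A *\<^sub>v \<Psi>0 \<in> carrier_vec d"
    using mult_mat_vec_carrier[OF mat_exp_carrier[OF A] \<open>\<Psi>0 \<in> carrier_vec d\<close>] .
  define \<psi> where "\<psi> = complex_of_real s \<cdot>\<^sub>v (mat_exp A *\<^sub>v \<Psi>0)"
  have \<psi>: "\<psi> \<in> carrier_vec d"
    using filtered by (simp add: \<psi>_def)
  have "vinner \<Psi>g \<psi> = complex_of_real s * vinner \<Psi>g \<Psi>0"
    unfolding \<psi>_def using A filtered g overlap by (subst vinner_smult_right) auto
  then have "s^2 * (cmod (vinner \<Psi>g \<Psi>0))^2 = (cmod (vinner \<Psi>g \<psi>))^2"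
    by (simp add: norm_mult power_mult_distrib)
  also have "\<dots> \<le> vnorm2 \<psi>"
    using norm_vinner_sq_le[OF g \<psi>] \<open>vnorm2 \<Psi>g = 1\<close> by simp
  finally show ?thesis
    unfolding \<psi>_def A_def .
qed

theorem lemma2:
  fixes n NH NT :: nat and h :: "nat \<Rightarrow> real" and \<sigma> :: "nat \<Rightarrow> nat \<Rightarrow> nat"
    and \<tau> Eg :: real and \<Psi>g \<Psi>0 :: "complex vec"
  defines "H \<equiv> hamiltonian n NH h \<sigma>"
  defines "C \<equiv> (LINT t|lborel. exp (- (real NT^2 * t^2) / (2 * \<tau>^2)) * (f_TV n NH h \<sigma> t) ^ NT)"
  defines "\<psi> \<equiv> complex_of_real (\<tau> * sqrt (2*pi) / (C * real NT))
              \<cdot>\<^sub>v (mat_exp (complex_of_real (- (\<tau>^2) / 2) \<cdot>\<^sub>m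
                    ((H - (complex_of_real Eg \<cdot>\<^sub>m 1\<^sub>m (2^n))) * (H - (complex_of_real Eg \<cdot>\<^sub>m 1\<^sub>m (2^n)))))
                   *\<^sub>v \<Psi>0)"
  defines "c \<equiv> (LINT u|lborel. exp (- (u^2) / 2) *
              (2 * exp (htot NH h * \<tau> / real NT * \<bar>u\<bar>) - 1 - 2 * (htot NH h * \<tau> / real NT) * \<bar>u\<bar>) ^ NT)"
  assumes pauli: "\<forall>j\<in>{1..NH}. \<forall>q<n. \<sigma> j q < 4"
    and NT: "1 \<le> NT" and tau: "0 < \<tau>"
    and ground: "eigenvector H \<Psi>g (complex_of_real Eg)"
    and minimal: "\<forall>e. eigenvalue H e \<longrightarrow> Eg \<le> Re e"
    and norm_g: "vnorm2 \<Psi>g = 1"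
    and psi0: "\<Psi>0 \<in> carrier_vec (2^n)" and norm_0: "vnorm2 \<Psi>0 = 1"
  shows "vnorm2 \<psi> \<ge> 2 * pi * (cmod (vinner \<Psi>g \<Psi>0))^2 / c^2
         \<and> (real NT > 4 * (htot NH h)^2 * \<tau>^2 \<longrightarrow>
              c \<le> sqrt (2 * pi / (1 - 4 * (htot NH h)^2 * \<tau>^2 / real NT)))"
proof -
  define s where "s = \<tau> / real NT"
  have "0 < s" using NT tau by (simp add: s_def)
  have C_eq: "C = normalisation n NH h \<sigma> s NT"
    using NT tau by (simp add: C_def normalisation_def s_def power_divide field_simps)
  have c_eq: "c = gaussian_tv_integral (htot NH h * s) NT"
    by (simp add: c_def gaussian_tv_integral_def tv_majorant_def s_def mult_ac)
  have "0 < C" "C \<le> s * c"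
    using normalisation_pos[OF \<open>0 < s\<close>] normalisation_le[OF \<open>0 < s\<close>] by (simp_all add: C_eq c_eq)
  then have "0 < C / s" "C / s \<le> c"
    using \<open>0 < s\<close> by (simp_all add: field_simps)
  then have "2 * pi * (cmod (vinner \<Psi>g \<Psi>0))^2 / c^2 \<le> 2 * pi * (cmod (vinner \<Psi>g \<Psi>0))^2 / (C / s)^2"
    by (intro divide_left_mono power_mono mult_pos_pos) auto
  also have "\<dots> = (\<tau> * sqrt (2 * pi) / (C * real NT))^2 * (cmod (vinner \<Psi>g \<Psi>0))^2"
    by (simp add: s_def power_divide power_mult_distrib)
  also have "\<dots> \<le> vnorm2 \<psi>"
    unfolding \<psi>_def H_def
    by (rule vnorm2_gaussian_filter_ge[OF hamiltonian_carrier hamiltonian_hermitian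
          ground[unfolded H_def] norm_g psi0])
  finally have lower: "vnorm2 \<psi> \<ge> 2 * pi * (cmod (vinner \<Psi>g \<Psi>0))^2 / c^2" .
  have "4 * real NT * (htot NH h * s)^2 = 4 * (htot NH h)^2 * \<tau>^2 / real NT"
    using NT by (simp add: s_def power2_eq_square)
  then have "real NT > 4 * (htot NH h)^2 * \<tau>^2 \<longrightarrow>
              c \<le> sqrt (2 * pi / (1 - 4 * (htot NH h)^2 * \<tau>^2 / real NT))"
    using NT htot_nonneg[of NH h] \<open>0 < s\<close> gaussian_tv_integral_le[of "htot NH h * s" NT]
    by (simp add: c_eq)
  with lower show ?thesis by blast
qed

end
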